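(* Let $h$ be a Hessenberg function on $\{1,\dots,n\}$. Every $(h,(n))$-filling occurs exactly once among the words at Level $n$ of the $h$-tableau-tree; i.e. the Level $n$ words are exactly all $(h,(n))$-fillings.
   Context: A Hessenberg function is $h:\{1,\dots,n\}\to\{1,\dots,n\}$, $h_i=h(i)$, with $i\le h_i$ and $h_i\le h_{i+1}$; degree tuple $\beta_i=i-\#\{k:h_k<i\}$. A word $u_1\cdots u_m$ of distinct numbers is $h$-permissible if $u_t\le h(u_{t+1})$ for all $t$; an $(h,(n))$-filling is an $h$-permissible permutation of $1,\dots,n$ written in one row. The $h$-tableau-tree: Level 1 is the word $1$; a vertex at Level $i-1$ is an $h$-permissible word $w$ on $\{1,\dots,i-1\}$, whose $\beta_i$ bullet positions are the gaps where inserting $i$ keeps the word $h$-permissible; its children at Level $i$ are joined by edges $x_i^j$, $0\le j\le\beta_i-1$, the child along $x_i^j$ being $w$ with $i$ inserted at the $(j+1)$-th bullet from the right. Each Level $n$ word has one leaf child at Level $n+1$ (edge label $1$), labelled by the product of edge labels on its root path. *)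

theory Defs
  imports Main
begin

definition hessenberg :: "nat \<Rightarrow> (nat \<Rightarrow> nat) \<Rightarrow> bool" where
  "hessenberg n h \<longleftrightarrow>
     (\<forall>i\<in>{1..n}. i \<le> h i \<and> h i \<le> n) \<and>
     (\<forall>i. 1 \<le> i \<and> i < n \<longrightarrow> h i \<le> h (Suc i))"

definition h_permissible :: "(nat \<Rightarrow> nat) \<Rightarrow> nat list \<Rightarrow> bool" where
  "h_permissible h u \<longleftrightarrow> distinct u \<and>
     (\<forall>t. Suc t < length u \<longrightarrow> u ! t \<le> h (u ! Suc t))"

definition h_filling :: "(nat \<Rightarrow> nat) \<Rightarrow> nat \<Rightarrow> nat list \<Rightarrow> bool" where
  "h_filling h n u \<longleftrightarrow> distinct u \<and> set u = {1..n} \<and> h_permissible h u"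

definition insert_at :: "nat \<Rightarrow> nat \<Rightarrow> nat list \<Rightarrow> nat list" where
  "insert_at k x w = take k w @ [x] @ drop k w"

definition bullets :: "(nat \<Rightarrow> nat) \<Rightarrow> nat \<Rightarrow> nat list \<Rightarrow> nat list" where
  "bullets h i w = filter (\<lambda>k. h_permissible h (insert_at k i w)) [0..<Suc (length w)]"

(* children of w, ordered by edge x_i^j, j = 0,1,...: the child along x_i^j
   has i inserted at the (j+1)-th bullet from the right *)
definition tree_children :: "(nat \<Rightarrow> nat) \<Rightarrow> nat \<Rightarrow> nat list \<Rightarrow> nat list list" where
  "tree_children h i w = map (\<lambda>k. insert_at k i w) (rev (bullets h i w))"

(* list (with multiplicity) of the vertex words at Level i of the h-tableau-tree;
   Level 1 is the single word 1 (Level 0 is an auxiliary empty word) *)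
fun tree_level :: "(nat \<Rightarrow> nat) \<Rightarrow> nat \<Rightarrow> nat list list" where
  "tree_level h 0 = [[]]"
| "tree_level h (Suc 0) = [[1]]"
| "tree_level h (Suc (Suc i)) = concat (map (tree_children h (Suc (Suc i))) (tree_level h (Suc i)))"

end

theory Submission
  imports Defs
begin

(* Call a word permissible on {1..i} if it is an h-permissible
   arrangement of 1,...,i.  Level i of the tree lists exactly these words, each
   once, by induction on i:
   - every child of a permissible word w on {1..i-1} inserts i at a bullet of w,
     so it is permissible on {1..i}; different (bullet, parent) pairs give
     different children, since deleting i recovers the parent and the position
     of i recovers the bullet;
   - conversely, deleting the maximal letter i from a permissible word u on
     {1..i} leaves a permissible word w (the new neighbours x, y satisfy
     x < i <= h y), and u arises from w by inserting i at a bullet. *)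

definition permissible_words :: "(nat \<Rightarrow> nat) \<Rightarrow> nat \<Rightarrow> nat list set" where
  "permissible_words h i = {u. set u = {1..i} \<and> h_permissible h u}"

(* Permissibility as a condition on adjacent letters, so that list library
   lemmas about successively apply. *)
lemma h_permissible_iff_successively:
  "h_permissible h u \<longleftrightarrow> distinct u \<and> successively (\<lambda>x y. x \<le> h y) u"
  unfolding h_permissible_def successively_conv_nth by simp

lemma distinct_concat_map_disjoint:
  assumes "distinct xs" "\<And>x. x \<in> set xs \<Longrightarrow> distinct (f x)"
    and "\<And>x y. x \<in> set xs \<Longrightarrow> y \<in> set xs \<Longrightarrow> x \<noteq> y \<Longrightarrow> set (f x) \<inter> set (f y) = {}"
  shows "distinct (concat (map f xs))"
  using assms by (induction xs) fastforce+

lemma set_insert_at: "k \<le> length w \<Longrightarrow> set (insert_at k x w) = insert x (set w)"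
  unfolding insert_at_def by (metis Un_insert_right append_Cons append_Nil
      append_take_drop_id insert_is_Un set_append set_simps(2) sup_commute)

lemma remove1_insert_at:
  assumes "x \<notin> set w"
  shows "remove1 x (insert_at k x w) = w"
proof -
  have "x \<notin> set (take k w)" using assms by (meson in_set_takeD)
  thus ?thesis unfolding insert_at_def by (simp add: remove1_append)
qed

lemma position_insert_at:
  assumes "x \<notin> set w" "k \<le> length w"
  shows "length (takeWhile (\<lambda>y. y \<noteq> x) (insert_at k x w)) = k"
proof -
  have "\<forall>y\<in>set (take k w). y \<noteq> x" using assms(1) by (metis in_set_takeD)
  thus ?thesis unfolding insert_at_def using assms(2) by (simp add: takeWhile_append2)
qed

lemma insert_at_inject:
  assumes "x \<notin> set w" "x \<notin> set w'" "k \<le> length w" "k' \<le> length w'"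
    and "insert_at k x w = insert_at k' x w'"
  shows "k = k' \<and> w = w'"
  using assms position_insert_at remove1_insert_at by metis

lemma set_bullets:
  "set (bullets h i w) = {k. k \<le> length w \<and> h_permissible h (insert_at k i w)}"
  unfolding bullets_def by (simp add: less_Suc_eq_le del: upt_Suc)

lemma set_tree_children:
  "set (tree_children h i w) =
     {insert_at k i w | k. k \<le> length w \<and> h_permissible h (insert_at k i w)}"
  unfolding tree_children_def by (auto simp: set_bullets)

lemma distinct_tree_children:
  assumes "i \<notin> set w"
  shows "distinct (tree_children h i w)"
proof -
  have "inj_on (\<lambda>k. insert_at k i w) (set (bullets h i w))"
    using insert_at_inject[OF assms assms] by (auto simp: set_bullets intro: inj_onI)
  moreover have "distinct (bullets h i w)" unfolding bullets_def by simp
  ultimately show ?thesis unfolding tree_children_def by (simp add: distinct_map)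
qed

(* Key combinatorial fact: deleting a letter m from a permissible word keeps it
   permissible provided the letter before m is at most m, because the new
   neighbours x, y satisfy x \<le> m \<le> h y. *)
lemma h_permissible_delete:
  assumes perm: "h_permissible h (a @ m # b)" and before: "a \<noteq> [] \<Longrightarrow> last a \<le> m"
  shows "h_permissible h (a @ b)"
proof -
  let ?R = "\<lambda>x y. x \<le> h y"
  have dist: "distinct (a @ b)" using perm by (simp add: h_permissible_def)
  have a: "successively ?R a" and mb: "successively ?R (m # b)"
    using perm by (auto simp: h_permissible_iff_successively successively_append_iff)
  have b: "successively ?R b" and m_hd: "b \<noteq> [] \<Longrightarrow> m \<le> h (hd b)"
    using mb by (auto simp: successively_Cons)
  have "a \<noteq> [] \<Longrightarrow> b \<noteq> [] \<Longrightarrow> last a \<le> h (hd b)"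
    using before m_hd by fastforce
  with a b dist show ?thesis
    by (auto simp: h_permissible_iff_successively successively_append_iff)
qed

lemma permissible_words_Suc_from_parent:
  assumes u: "u \<in> permissible_words h (Suc i)"
  obtains w k where "w \<in> permissible_words h i" "k \<le> length w"
    "h_permissible h (insert_at k (Suc i) w)" "u = insert_at k (Suc i) w"
proof -
  have set_u: "set u = {1..Suc i}" and perm_u: "h_permissible h u"
    using u by (auto simp: permissible_words_def)
  have "Suc i \<in> set u" using set_u by simp
  then obtain a b where ab: "u = a @ Suc i # b" by (meson split_list)
  define w where "w = a @ b"
  have dist_u: "distinct u" using perm_u by (simp add: h_permissible_def)
  have "Suc i \<notin> set w" "set u = insert (Suc i) (set w)"
    using dist_u ab by (auto simp: w_def)
  hence "set w = {1..Suc i} - {Suc i}" using set_u by auto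
  also have "\<dots> = {1..i}" by auto
  finally have set_w: "set w = {1..i}" .
  have "last a \<in> set w" if "a \<noteq> []" using that by (simp add: w_def)
  hence "a \<noteq> [] \<Longrightarrow> last a \<le> Suc i" using set_w by auto
  hence "h_permissible h w" using h_permissible_delete perm_u ab w_def by blast
  moreover have "u = insert_at (length a) (Suc i) w" by (simp add: ab w_def insert_at_def)
  moreover have "length a \<le> length w" by (simp add: w_def)
  ultimately show ?thesis
    using that set_w perm_u by (simp add: permissible_words_def)
qed

lemma children_enumerate_next_level:
  assumes dist: "distinct L" and set_L: "set L = permissible_words h i"
  shows "distinct (concat (map (tree_children h (Suc i)) L)) \<and>
         set (concat (map (tree_children h (Suc i)) L)) = permissible_words h (Suc i)"
proof
  have fresh: "Suc i \<notin> set w" if "w \<in> set L" for w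
    using that set_L by (auto simp: permissible_words_def)
  show "distinct (concat (map (tree_children h (Suc i)) L))"
  proof (rule distinct_concat_map_disjoint[OF dist])
    show "distinct (tree_children h (Suc i) w)" if "w \<in> set L" for w
      using distinct_tree_children fresh that by blast
    show "set (tree_children h (Suc i) w) \<inter> set (tree_children h (Suc i) w') = {}"
      if "w \<in> set L" "w' \<in> set L" "w \<noteq> w'" for w w'
    proof (rule ccontr)
      assume "set (tree_children h (Suc i) w) \<inter> set (tree_children h (Suc i) w') \<noteq> {}"
      then obtain k k' where "insert_at k (Suc i) w = insert_at k' (Suc i) w'"
        "k \<le> length w" "k' \<le> length w'"
        by (auto simp: set_tree_children)
      thus False using insert_at_inject fresh that by blast
    qed
  qed
  show "set (concat (map (tree_children h (Suc i)) L)) = permissible_words h (Suc i)"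
  proof
    show "set (concat (map (tree_children h (Suc i)) L)) \<subseteq> permissible_words h (Suc i)"
    proof
      fix u assume "u \<in> set (concat (map (tree_children h (Suc i)) L))"
      then obtain w k where w: "w \<in> set L" and k: "k \<le> length w"
        and perm: "h_permissible h (insert_at k (Suc i) w)" and u: "u = insert_at k (Suc i) w"
        by (auto simp: set_tree_children)
      have "set w = {1..i}" using w set_L by (simp add: permissible_words_def)
      hence "set u = {1..Suc i}" using set_insert_at[OF k] u by auto
      thus "u \<in> permissible_words h (Suc i)" using perm u by (simp add: permissible_words_def)
    qed
    show "permissible_words h (Suc i) \<subseteq> set (concat (map (tree_children h (Suc i)) L))"
    proof
      fix u assume "u \<in> permissible_words h (Suc i)"
      then obtain w k where "w \<in> permissible_words h i" "k \<le> length w"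
        "h_permissible h (insert_at k (Suc i) w)" "u = insert_at k (Suc i) w"
        by (rule permissible_words_Suc_from_parent)
      hence "w \<in> set L" "u \<in> set (tree_children h (Suc i) w)"
        using set_L by (auto simp: set_tree_children)
      thus "u \<in> set (concat (map (tree_children h (Suc i)) L))" by auto
    qed
  qed
qed

lemma permissible_words_one: "permissible_words h 1 = {[1]}"
proof -
  have "u = [1]" if "set u = {1}" "distinct u" for u :: "nat list"
  proof -
    have "length u = 1" using distinct_card[OF that(2)] that(1) by simp
    then obtain a where "u = [a]" by (metis One_nat_def length_0_conv length_Suc_conv)
    thus ?thesis using that(1) by simp
  qed
  thus ?thesis by (auto simp: permissible_words_def h_permissible_def)
qed

lemma tree_level_enumerates:
  "distinct (tree_level h i) \<and> set (tree_level h i) = permissible_words h i"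
proof (induction h i rule: tree_level.induct)
  case (1 h)
  show ?case by (auto simp: permissible_words_def h_permissible_def)
next
  case (2 h)
  show ?case using permissible_words_one by simp
next
  case (3 h i)
  thus ?case
    using children_enumerate_next_level[of "tree_level h (Suc i)" h "Suc i"] by simp
qed

theorem mainTheorem15:
  fixes h :: "nat \<Rightarrow> nat" and n :: nat
  assumes "1 \<le> n" and "hessenberg n h"
  shows "distinct (tree_level h n) \<and> set (tree_level h n) = {u. h_filling h n u}"
proof -
  have "permissible_words h n = {u. h_filling h n u}"
    by (auto simp: permissible_words_def h_filling_def h_permissible_def)
  thus ?thesis using tree_level_enumerates by metis
qed

end
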